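(* Each of the following five sets of four generalized Bell states in $\mathbb{C}^4\otimes\mathbb{C}^4$ is perfectly distinguishable by one-way LOCC using only projective measurements: $\{\ket{\psi_{00}}\}\cup T$ with $T$ one of $\{\ket{\psi_{01}},\ket{\psi_{10}},\ket{\psi_{33}}\}$, $\{\ket{\psi_{01}},\ket{\psi_{11}},\ket{\psi_{32}}\}$, $\{\ket{\psi_{01}},\ket{\psi_{12}},\ket{\psi_{31}}\}$, $\{\ket{\psi_{01}},\ket{\psi_{13}},\ket{\psi_{30}}\}$, $\{\ket{\psi_{01}},\ket{\psi_{11}},\ket{\psi_{30}}\}$.
   Context: Generalized Bell states in $\mathbb{C}^4\otimes\mathbb{C}^4$ (Alice holds the first factor, Bob the second): $\ket{\psi_{nm}}=\frac12\sum_{j=0}^{3}e^{2\pi i jn/4}\ket{j}_A\ket{j\oplus_4 m}_B$ for $n,m\in\{0,1,2,3\}$, where $j\oplus_4 m=(j+m)\bmod 4$. Perfect distinguishability by one-way LOCC using only projective measurements means: one party performs a projective measurement on her subsystem, communicates the outcome classically, and the other party then performs a projective measurement (depending on that outcome) whose result identifies with certainty which state of the set was shared. *)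

theory Defs
  imports Complex_Main
begin

text \<open>Vectors in C^4 (x) C^4 are functions nat => nat => complex, entry (j,k) meaning the
coefficient of |j>_A |k>_B, only indices j,k < 4 are relevant.
Operators on C^4 are 4x4 matrices nat => nat => complex (indices < 4).\<close>

type_synonym state44 = "nat \<Rightarrow> nat \<Rightarrow> complex"
type_synonym op4 = "nat \<Rightarrow> nat \<Rightarrow> complex"

definition bell :: "nat \<Rightarrow> nat \<Rightarrow> state44" where
  "bell n m = (\<lambda>j k. if j < 4 \<and> k = (j + m) mod 4
       then (1/2) * cis (2 * pi * real j * real n / 4) else 0)"

definition is_proj4 :: "op4 \<Rightarrow> bool" where
  "is_proj4 P \<longleftrightarrow> (\<forall>i<4. \<forall>j<4. P i j = cnj (P j i) \<and> (\<Sum>k<4. P i k * P k j) = P i j)"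

definition proj_meas4 :: "(nat \<Rightarrow> op4) \<Rightarrow> nat \<Rightarrow> bool" where
  "proj_meas4 P m \<longleftrightarrow> (\<forall>a<m. is_proj4 (P a)) \<and>
     (\<forall>i<4. \<forall>j<4. (\<Sum>a<m. P a i j) = (if i = j then 1 else 0))"

definition expval :: "op4 \<Rightarrow> op4 \<Rightarrow> state44 \<Rightarrow> complex" where
  "expval A B \<psi> = (\<Sum>j<4. \<Sum>k<4. \<Sum>j'<4. \<Sum>k'<4.
       cnj (\<psi> j k) * A j j' * B k k' * \<psi> j' k')"

text \<open>One-way LOCC with projective measurements, first measuring party Alice
(alice_first = True) or Bob (alice_first = False).\<close>
definition one_way_proj_dist :: "bool \<Rightarrow> ('i \<Rightarrow> state44) \<Rightarrow> 'i set \<Rightarrow> bool" where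
  "one_way_proj_dist alice_first st S \<longleftrightarrow>
     (\<exists>P m Q n g. proj_meas4 P m \<and> (\<forall>a<m. proj_meas4 (Q a) (n a)) \<and>
        (\<forall>s\<in>S. \<forall>a<m. \<forall>b<n a.
           (if alice_first then expval (P a) (Q a b) (st s) else expval (Q a b) (P a) (st s)) \<noteq> 0
           \<longrightarrow> g a b = s))"

definition one_way_LOCC_proj_distinguishable :: "('i \<Rightarrow> state44) \<Rightarrow> 'i set \<Rightarrow> bool" where
  "one_way_LOCC_proj_distinguishable st S \<longleftrightarrow>
     one_way_proj_dist True st S \<or> one_way_proj_dist False st S"

end

theory Submission
  imports Defs
begin

text \<open>Alice and Bob both measure in the orthonormal basis
(|0> \<plusminus> |2>)/\<surd>2, (|1> \<plusminus> |3>)/\<surd>2, independently of each other. For product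
rank-one projectors the outcome probability of a state is the squared modulus of its
amplitude along the product basis vector, and for a Bell state this amplitude is an explicit
sum of four powers of \<i>. For each of the five sets, every one of the 16 product outcomes
has a nonzero amplitude for at most one of the four states, so the pair of outcomes
identifies the state.\<close>

lemma cis_quarter_turns: "cis (2 * pi * real j * real n / 4) = \<i> ^ (j * n)"
proof -
  have "cis (2 * pi * real j * real n / 4) = cis (real (j * n) * (pi / 2))"
    by (simp add: field_simps)
  also have "\<dots> = cis (pi / 2) ^ (j * n)"
    by (rule DeMoivre[symmetric])
  also have "cis (pi / 2) = \<i>"
    by (simp add: complex_eq_iff)
  finally show ?thesis .
qed

lemma sum_bell: "(\<Sum>j<4. \<Sum>k<4. u j * w k * bell n m j k) =
    (\<Sum>j<4. u j * w ((j + m) mod 4) * \<i> ^ (j * n)) / 2"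
proof -
  have "(\<Sum>k<4. u j * w k * bell n m j k) = u j * w ((j + m) mod 4) * \<i> ^ (j * n) / 2"
    if "j < 4" for j
  proof -
    have "(\<Sum>k<4. u j * w k * bell n m j k) =
        (\<Sum>k<4. if k = (j + m) mod 4 then u j * w k * \<i> ^ (j * n) / 2 else 0)"
      unfolding bell_def cis_quarter_turns by (rule sum.cong) (auto simp: that)
    then show ?thesis
      by simp
  qed
  then show ?thesis
    unfolding sum_divide_distrib by (intro sum.cong) auto
qed

lemma expval_rank_one:
  "expval (\<lambda>i j. c * u i * cnj (u j)) (\<lambda>i j. d * w i * cnj (w j)) \<psi> =
     c * d * cnj (\<Sum>j<4. \<Sum>k<4. cnj (u j) * cnj (w k) * \<psi> j k)
           * (\<Sum>j<4. \<Sum>k<4. cnj (u j) * cnj (w k) * \<psi> j k)"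
proof -
  have "cnj (\<Sum>j<4. \<Sum>k<4. cnj (u j) * cnj (w k) * \<psi> j k)
           * (\<Sum>j<4. \<Sum>k<4. cnj (u j) * cnj (w k) * \<psi> j k) =
        (\<Sum>j<4. \<Sum>j'<4. \<Sum>k<4. \<Sum>k'<4.
           (u j * w k * cnj (\<psi> j k)) * (cnj (u j') * cnj (w k') * \<psi> j' k'))"
    by (simp add: sum_product)
  also have "\<dots> = (\<Sum>j<4. \<Sum>k<4. \<Sum>j'<4. \<Sum>k'<4.
           (u j * w k * cnj (\<psi> j k)) * (cnj (u j') * cnj (w k') * \<psi> j' k'))"
    by (intro sum.cong[OF refl] sum.swap)
  finally have amp_square: "cnj (\<Sum>j<4. \<Sum>k<4. cnj (u j) * cnj (w k) * \<psi> j k)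
           * (\<Sum>j<4. \<Sum>k<4. cnj (u j) * cnj (w k) * \<psi> j k) = \<dots>" .
  show ?thesis
    unfolding expval_def mult.assoc[of "c * d"] amp_square by (simp add: sum_distrib_left mult_ac)
qed

lemma one_way_proj_dist_product_measurement:
  assumes "proj_meas4 P m" and "proj_meas4 Q n"
    and "\<forall>a<m. \<forall>b<n. \<forall>s\<in>S. \<forall>s'\<in>S.
           expval (P a) (Q b) (st s) \<noteq> 0 \<longrightarrow> expval (P a) (Q b) (st s') \<noteq> 0 \<longrightarrow> s = s'"
  shows "one_way_proj_dist True st S"
proof -
  let ?g = "\<lambda>a b. THE s. s \<in> S \<and> expval (P a) (Q b) (st s) \<noteq> 0"
  have "\<forall>s\<in>S. \<forall>a<m. \<forall>b<n. expval (P a) (Q b) (st s) \<noteq> 0 \<longrightarrow> ?g a b = s"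
    using assms(3) by auto
  then show ?thesis
    unfolding one_way_proj_dist_def using assms(1,2) by (intro exI[of _ P] exI[of _ m] exI[of _ "\<lambda>_. Q"] exI[of _ "\<lambda>_. n"] exI[of _ ?g]) auto
qed

definition mbasis :: "nat \<Rightarrow> nat \<Rightarrow> complex" where
  "mbasis a j = (if a < 4 \<and> j < 4
     then of_int ([[1,0,1,0], [0,1,0,1], [1,0,-1,0], [0,1,0,-1::int]] ! a ! j) else 0)"

text \<open>The basis vectors have squared norm 2, hence the factor 1/2.\<close>
definition mproj :: "nat \<Rightarrow> op4" where
  "mproj a = (\<lambda>i j. 1/2 * mbasis a i * cnj (mbasis a j))"

lemma lessThan_4: "{..<4::nat} = {0, 1, 2, 3}"
  by auto

lemma all_less_4: "(\<forall>i<4::nat. Q i) \<longleftrightarrow> Q 0 \<and> Q 1 \<and> Q 2 \<and> Q 3"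
  by (auto simp: less_Suc_eq numeral_eq_Suc)

lemma cnj_mbasis [simp]: "cnj (mbasis a j) = mbasis a j"
  by (simp add: mbasis_def)

lemma proj_meas4_mproj: "proj_meas4 mproj 4"
  unfolding proj_meas4_def is_proj4_def mproj_def all_less_4 lessThan_4
  by (simp add: mbasis_def)

definition bell_amp :: "nat \<Rightarrow> nat \<Rightarrow> nat \<Rightarrow> nat \<Rightarrow> complex" where
  "bell_amp a b n m = (\<Sum>j<4. mbasis a j * mbasis b ((j + m) mod 4) * \<i> ^ (j * n))"

lemma expval_mproj_bell:
  "expval (mproj a) (mproj b) (bell n m) = cnj (bell_amp a b n m) * bell_amp a b n m / 16"
  unfolding mproj_def expval_rank_one
  by (simp add: sum_bell bell_amp_def del: cnj_sum complex_cnj_mult complex_cnj_power)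

lemma bell_distinguishable_if_amp_separates:
  assumes "\<And>a b n m n' m'. a < 4 \<Longrightarrow> b < 4 \<Longrightarrow> (n, m) \<in> S \<Longrightarrow> (n', m') \<in> S \<Longrightarrow>
             bell_amp a b n m \<noteq> 0 \<Longrightarrow> bell_amp a b n' m' \<noteq> 0 \<Longrightarrow> (n, m) = (n', m')"
  shows "one_way_LOCC_proj_distinguishable (\<lambda>(n, m). bell n m) S"
  unfolding one_way_LOCC_proj_distinguishable_def
  using assms
  by (intro disjI1 one_way_proj_dist_product_measurement[OF proj_meas4_mproj proj_meas4_mproj])
     (fastforce simp: expval_mproj_bell)

lemma ii_powers: "\<i> ^ 3 = - \<i>" "\<i> ^ 4 = 1" "\<i> ^ 5 = \<i>" "\<i> ^ 6 = -1" "\<i> ^ 7 = - \<i>"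
    "\<i> ^ 8 = 1" "\<i> ^ 9 = \<i>"
  by (simp_all add: eval_nat_numeral)

theorem theorem7:
  shows "\<forall>T \<in> { {(0,1),(1,0),(3,3)}, {(0,1),(1,1),(3,2)}, {(0,1),(1,2),(3,1)},
                  {(0,1),(1,3),(3,0)}, {(0,1),(1,1),(3,0)} }.
           one_way_LOCC_proj_distinguishable (\<lambda>(n::nat, m::nat). bell n m) ({(0,0)} \<union> T)"
proof
  fix T :: "(nat \<times> nat) set"
  assume "T \<in> { {(0,1),(1,0),(3,3)}, {(0,1),(1,1),(3,2)}, {(0,1),(1,2),(3,1)},
                  {(0,1),(1,3),(3,0)}, {(0,1),(1,1),(3,0)} }"
  then show "one_way_LOCC_proj_distinguishable (\<lambda>(n, m). bell n m) ({(0,0)} \<union> T)"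
    by (elim insertE emptyE; intro bell_distinguishable_if_amp_separates;
        simp add: less_Suc_eq numeral_eq_Suc; elim disjE;
        simp add: bell_amp_def lessThan_4 mbasis_def ii_powers)
qed

end
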